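(* For every positive integer $n$, the rank-width of the $n\times n$ comparability grid is at least $n/4$.
   Context: The $n\times n$ comparability grid is the simple graph with vertex set $\{1,\dots,n\}^2$ in which distinct $(i,j),(i',j')$ are adjacent iff ($i\le i'$ and $j\le j'$) or ($i\ge i'$ and $j\ge j'$). For $X\subseteq V(G)$, the cut-rank $r(X)$ is the $\mathrm{GF}(2)$-rank of the submatrix of the adjacency matrix with rows $X$ and columns $V(G)\setminus X$. A rank-decomposition of $G$ is a tree $T$ all of whose vertices have degree $1$ or $3$, together with a bijection between the leaves of $T$ and $V(G)$; each edge $e$ of $T$ splits the leaves, hence $V(G)$, into two parts $(X_e,Y_e)$, and the width of $e$ is $r(X_e)$. The width of the decomposition is the maximum width of its edges, and the rank-width $rw(G)$ is the minimum width over all rank-decompositions of $G$. *)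

theory Defs
  imports Main "HOL-Library.Extended_Nat"
begin

text \<open>Simple graphs are given by a vertex set V and a symmetric irreflexive adjacency
  relation adj.\<close>

definition comp_grid_adj :: "nat \<times> nat \<Rightarrow> nat \<times> nat \<Rightarrow> bool" where
  "comp_grid_adj p q \<longleftrightarrow> p \<noteq> q \<and>
     ((fst p \<le> fst q \<and> snd p \<le> snd q) \<or> (fst p \<ge> fst q \<and> snd p \<ge> snd q))"

definition comp_grid_V :: "nat \<Rightarrow> (nat \<times> nat) set" where
  "comp_grid_V n = {1..n} \<times> {1..n}"

text \<open>GF(2) linear independence of the rows indexed by R of the 0/1 matrix with
  entries adj x y (x in R, y in Y): no nonempty subset of rows sums to zero over GF(2),
  i.e. for each nonempty subset S there is a column y with an odd number of ones in S.\<close>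
definition gf2_rows_indep :: "('v \<Rightarrow> 'v \<Rightarrow> bool) \<Rightarrow> 'v set \<Rightarrow> 'v set \<Rightarrow> bool" where
  "gf2_rows_indep adj R Y \<longleftrightarrow>
     (\<forall>S. S \<subseteq> R \<and> S \<noteq> {} \<longrightarrow> (\<exists>y\<in>Y. odd (card {x\<in>S. adj x y})))"

definition gf2_rank :: "('v \<Rightarrow> 'v \<Rightarrow> bool) \<Rightarrow> 'v set \<Rightarrow> 'v set \<Rightarrow> nat" where
  "gf2_rank adj X Y = Max {card R | R. R \<subseteq> X \<and> finite R \<and> gf2_rows_indep adj R Y}"

definition cut_rank :: "'v set \<Rightarrow> ('v \<Rightarrow> 'v \<Rightarrow> bool) \<Rightarrow> 'v set \<Rightarrow> nat" where
  "cut_rank V adj X = gf2_rank adj X (V - X)"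

definition reach :: "nat set set \<Rightarrow> nat \<Rightarrow> nat \<Rightarrow> bool" where
  "reach E u v \<longleftrightarrow> (u, v) \<in> {(a, b). {a, b} \<in> E}\<^sup>*"

definition is_tree :: "nat set \<Rightarrow> nat set set \<Rightarrow> bool" where
  "is_tree TV TE \<longleftrightarrow> finite TV \<and> TV \<noteq> {} \<and>
     (\<forall>e\<in>TE. \<exists>u v. e = {u, v} \<and> u \<noteq> v \<and> u \<in> TV \<and> v \<in> TV) \<and>
     (\<forall>u\<in>TV. \<forall>v\<in>TV. reach TE u v) \<and>
     \<comment> \<open>acyclic: no edge lies on a cycle\<close>
     (\<forall>u v. {u, v} \<in> TE \<longrightarrow> \<not> reach (TE - {{u, v}}) u v)"

definition tdeg :: "nat set set \<Rightarrow> nat \<Rightarrow> nat" where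
  "tdeg TE t = card {e\<in>TE. t \<in> e}"

definition leaves :: "nat set \<Rightarrow> nat set set \<Rightarrow> nat set" where
  "leaves TV TE = {t\<in>TV. tdeg TE t = 1}"

definition rank_decomp :: "'v set \<Rightarrow> nat set \<Rightarrow> nat set set \<Rightarrow> (nat \<Rightarrow> 'v) \<Rightarrow> bool" where
  "rank_decomp V TV TE f \<longleftrightarrow> is_tree TV TE \<and>
     (\<forall>t\<in>TV. tdeg TE t = 1 \<or> tdeg TE t = 3) \<and>
     bij_betw f (leaves TV TE) V"

definition edge_width :: "'v set \<Rightarrow> ('v \<Rightarrow> 'v \<Rightarrow> bool) \<Rightarrow> nat set \<Rightarrow> nat set set \<Rightarrow> (nat \<Rightarrow> 'v)
    \<Rightarrow> nat \<Rightarrow> nat \<Rightarrow> nat" where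
  "edge_width V adj TV TE f u v =
     cut_rank V adj (f ` {l \<in> leaves TV TE. reach (TE - {{u, v}}) u l})"

definition decomp_width :: "'v set \<Rightarrow> ('v \<Rightarrow> 'v \<Rightarrow> bool) \<Rightarrow> nat set \<Rightarrow> nat set set
    \<Rightarrow> (nat \<Rightarrow> 'v) \<Rightarrow> nat" where
  "decomp_width V adj TV TE f = Max {edge_width V adj TV TE f u v | u v. {u, v} \<in> TE}"

text \<open>Rank-width: minimum width over all rank-decompositions (infinity if there is none).\<close>
definition rank_width :: "'v set \<Rightarrow> ('v \<Rightarrow> 'v \<Rightarrow> bool) \<Rightarrow> enat" where
  "rank_width V adj =
     (INF d \<in> {(TV, TE, f). rank_decomp V TV TE f}.
        enat (case d of (TV, TE, f) \<Rightarrow> decomp_width V adj TV TE f))"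

end

theory Submission
  imports Defs
begin

(* A cubic tree with N >= 2 leaves has an edge both of whose sides contain at least N/3 leaves:
   starting from a leaf edge, keep stepping towards the side holding more than 2N/3 leaves.
   For a rank-decomposition of the n x n comparability grid this yields a cut (X, Y) of the
   grid with |X|, |Y| >= n^2/3.  Call a row or column mixed if it meets both X and Y.  If fewer
   than n/2 rows and fewer than n/2 columns were mixed, a pure row and a pure column would meet
   in a vertex, say of X; then both lie in X, so every vertex of Y sits on a mixed row and a
   mixed column and |Y| < n^2/4.  Hence at least n/2 rows or at least n/2 columns are mixed.
   The mixed rows whose first entry lies in X, resp. in Y, each give a triangular submatrix of
   the cut matrix, so there are at most 2 r(X) of them, and n <= 4 r(X).  Columns follow by the
   symmetry (i, j) |-> (j, i) of the grid. *)

section \<open>Paths in edge sets and cubic trees\<close>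

lemma reach_refl [simp]: "reach E u u"
  by (simp add: reach_def)

lemma reach_step: "reach E u x \<Longrightarrow> {x, y} \<in> E \<Longrightarrow> reach E u y"
  unfolding reach_def by (erule rtrancl_into_rtrancl) auto

lemma reach_edge: "{x, y} \<in> E \<Longrightarrow> reach E x y"
  using reach_step[of E x x y] by simp

lemma reach_trans: "reach E u x \<Longrightarrow> reach E x y \<Longrightarrow> reach E u y"
  unfolding reach_def by (rule rtrancl_trans)

lemma reach_mono: "reach E u x \<Longrightarrow> E \<subseteq> E' \<Longrightarrow> reach E' u x"
  unfolding reach_def by (erule rtrancl_mono[THEN subsetD, rotated]) auto

lemma reach_induct [consumes 1, case_names refl step]:
  assumes "reach E a x" "P a"
    and "\<And>x y. reach E a x \<Longrightarrow> {x, y} \<in> E \<Longrightarrow> P x \<Longrightarrow> P y"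
  shows "P x"
  using assms(1) unfolding reach_def
proof (induction rule: rtrancl_induct)
  case base
  then show ?case using assms(2) by simp
next
  case (step y z)
  then show ?case using assms(3)[of y z] unfolding reach_def by auto
qed

lemma reach_avoiding_edge:
  assumes "reach E a x"
  shows "reach (E - {{p, q}}) a x \<or> reach (E - {{p, q}}) a p \<or> reach (E - {{p, q}}) a q"
  using assms
proof (induction rule: reach_induct)
  case refl
  then show ?case by simp
next
  case (step x y)
  show ?case
  proof (cases "{x, y} = {p, q}")
    case True
    then have "x = p \<or> x = q" by (metis doubleton_eq_iff)
    then show ?thesis using step.IH by blast
  next
    case False
    then show ?thesis using step by (metis reach_step DiffI singletonD)
  qed
qed

lemma reach_from_edge_end:
  assumes "reach E a x" "a \<in> {p, q}"
  shows "reach (E - {{p, q}}) p x \<or> reach (E - {{p, q}}) q x"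
  using assms
proof (induction rule: reach_induct)
  case refl
  then show ?case by auto
next
  case (step x y)
  show ?case
  proof (cases "{x, y} = {p, q}")
    case True
    then have "y = p \<or> y = q" by (metis doubleton_eq_iff)
    then show ?thesis by auto
  next
    case False
    then show ?thesis using step by (metis reach_step DiffI singletonD)
  qed
qed

locale cubic_tree =
  fixes TV :: "nat set" and TE :: "nat set set"
  assumes tree: "is_tree TV TE"
    and degree_1_or_3: "\<forall>t\<in>TV. tdeg TE t = 1 \<or> tdeg TE t = 3"
begin

definition side :: "nat \<Rightarrow> nat \<Rightarrow> nat set" where
  "side u v = {x. reach (TE - {{u, v}}) u x}"

definition leaf_side :: "nat \<Rightarrow> nat \<Rightarrow> nat set" where
  "leaf_side u v = {l \<in> leaves TV TE. reach (TE - {{u, v}}) u l}"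

lemma leaf_side_eq: "leaf_side u v = leaves TV TE \<inter> side u v"
  unfolding leaf_side_def side_def by blast

lemma edgeE:
  assumes "e \<in> TE"
  obtains u v where "e = {u, v}" "u \<noteq> v" "u \<in> TV" "v \<in> TV"
  using assms tree unfolding is_tree_def by blast

lemma edge_vertices: "{u, v} \<in> TE \<Longrightarrow> u \<in> TV \<and> v \<in> TV"
  by (erule edgeE) (auto simp: doubleton_eq_iff)

lemma not_reach_across_edge: "{u, v} \<in> TE \<Longrightarrow> \<not> reach (TE - {{u, v}}) u v"
  using tree unfolding is_tree_def by blast

lemma finite_TV: "finite TV"
  using tree unfolding is_tree_def by blast

lemma finite_TE: "finite TE"
proof (rule finite_subset)
  show "TE \<subseteq> Pow TV" by (blast elim: edgeE)
qed (simp add: finite_TV)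

lemma finite_leaves: "finite (leaves TV TE)"
  using finite_TV unfolding leaves_def by simp

lemma leaf_side_subset: "leaf_side u v \<subseteq> leaves TV TE"
  unfolding leaf_side_def by blast

lemma finite_leaf_side: "finite (leaf_side u v)"
  using finite_leaves leaf_side_subset by (rule finite_subset[rotated])

lemma reach_in_TV: "reach E u x \<Longrightarrow> E \<subseteq> TE \<Longrightarrow> u \<in> TV \<Longrightarrow> x \<in> TV"
  by (induction rule: reach_induct) (auto dest: edge_vertices)

lemma finite_side: "{u, v} \<in> TE \<Longrightarrow> finite (side u v)"
  using reach_in_TV[of "TE - {{u, v}}" u] edge_vertices finite_TV
  by (auto simp: side_def intro: finite_subset)

lemma edge_at_vertex:
  assumes "e \<in> TE" "u \<in> e"
  obtains w where "e = {u, w}"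
proof -
  from assms(1) obtain a b where "e = {a, b}" by (rule edgeE)
  with assms(2) that show thesis by (auto simp: insert_commute)
qed

lemma side_of_leaf:
  assumes "tdeg TE u = 1" "{u, v} \<in> TE"
  shows "side u v = {u}"
proof -
  have edges_at_u: "{e\<in>TE. u \<in> e} = {{u, v}}"
  proof -
    obtain e where "{e\<in>TE. u \<in> e} = {e}"
      using assms(1) unfolding tdeg_def by (rule card_1_singletonE)
    moreover have "{u, v} \<in> {e\<in>TE. u \<in> e}" using assms(2) by simp
    ultimately show ?thesis by (metis singletonD)
  qed
  have "x = u" if "x \<in> side u v" for x
  proof -
    from that have "reach (TE - {{u, v}}) u x" by (simp add: side_def)
    then show "x = u"
    proof (induction rule: reach_induct)
      case (step x y)
      then have "{u, y} \<in> {e\<in>TE. u \<in> e}" "{u, y} \<noteq> {u, v}" by auto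
      with edges_at_u show ?case by (metis singletonD)
    qed simp
  qed
  moreover have "u \<in> side u v" by (simp add: side_def)
  ultimately show ?thesis by blast
qed

lemma branch_neighbours:
  assumes "tdeg TE u = 3" "{u, v} \<in> TE"
  obtains w1 w2 where "{u, w1} \<in> TE" "{u, w2} \<in> TE" "w1 \<noteq> v" "w2 \<noteq> v"
    "\<forall>e\<in>TE. u \<in> e \<longrightarrow> e = {u, v} \<or> e = {u, w1} \<or> e = {u, w2}"
proof -
  let ?S = "{e\<in>TE. u \<in> e} - {{u, v}}"
  have "card ?S = 2"
    using assms finite_TE unfolding tdeg_def by (simp add: card_Diff_singleton)
  then obtain e1 e2 where e12: "?S = {e1, e2}" unfolding card_2_iff by blast
  then have "e1 \<in> ?S" "e2 \<in> ?S" by simp_all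
  then have e1: "e1 \<in> TE" "u \<in> e1" and e2: "e2 \<in> TE" "u \<in> e2" by simp_all
  obtain w1 where w1: "e1 = {u, w1}" using e1 by (rule edge_at_vertex)
  obtain w2 where w2: "e2 = {u, w2}" using e2 by (rule edge_at_vertex)
  have edges_at_u: "e = {u, v} \<or> e = e1 \<or> e = e2" if "e \<in> TE" "u \<in> e" for e
  proof (cases "e = {u, v}")
    case False
    with that have "e \<in> ?S" by simp
    then show ?thesis unfolding e12 by simp
  qed simp
  show thesis
  proof (rule that)
    show "{u, w1} \<in> TE" "{u, w2} \<in> TE" using e1 e2 w1 w2 by simp_all
    show "w1 \<noteq> v" "w2 \<noteq> v" using \<open>e1 \<in> ?S\<close> \<open>e2 \<in> ?S\<close> w1 w2 by auto
    show "\<forall>e\<in>TE. u \<in> e \<longrightarrow> e = {u, v} \<or> e = {u, w1} \<or> e = {u, w2}"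
      using edges_at_u w1 w2 by simp
  qed
qed

lemma side_step:
  assumes "x \<in> side w u" "{x, y} \<in> TE"
  shows "y = u \<or> y \<in> side w u"
proof (cases "{x, y} = {w, u}")
  case True
  then have "y = w \<or> y = u" by (auto simp: doubleton_eq_iff)
  then show ?thesis by (auto simp: side_def)
next
  case False
  with assms(2) have "{x, y} \<in> TE - {{w, u}}" by simp
  with assms(1) show ?thesis unfolding side_def by (auto intro: reach_step)
qed

lemma side_branch_subset:
  assumes edges_at_u: "\<forall>e\<in>TE. u \<in> e \<longrightarrow> e = {u, v} \<or> e = {u, w1} \<or> e = {u, w2}"
  shows "side u v \<subseteq> {u} \<union> side w1 u \<union> side w2 u"
proof
  fix x
  assume "x \<in> side u v"
  then have "reach (TE - {{u, v}}) u x" unfolding side_def by simp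
  then show "x \<in> {u} \<union> side w1 u \<union> side w2 u"
  proof (induction rule: reach_induct)
    case (step x y)
    from step.IH consider "x = u" | "x \<in> side w1 u" | "x \<in> side w2 u" by blast
    then show ?case
    proof cases
      case 1
      with step.hyps have y_edge: "{u, y} \<in> TE" "{u, y} \<noteq> {u, v}" by auto
      have "{u, y} = {u, w1} \<or> {u, y} = {u, w2}"
        using edges_at_u[rule_format, OF y_edge(1) insertI1] y_edge(2) by simp
      then have "y = w1 \<or> y = w2" by (auto simp: doubleton_eq_iff)
      then show ?thesis by (auto simp: side_def)
    next
      case 2
      then show ?thesis using side_step[of x w1 u y] step.hyps(2) by auto
    next
      case 3
      then show ?thesis using side_step[of x w2 u y] step.hyps(2) by auto
    qed
  qed simp
qed

lemma side_psubset:
  assumes "{u, v} \<in> TE" "{u, w} \<in> TE" "w \<noteq> v"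
  shows "side w u \<subset> side u v"
proof -
  let ?E = "TE - {{w, u}}"
  have no_return: "\<not> reach ?E w u"
    using not_reach_across_edge[of w u] assms(2) by (simp add: insert_commute)
  have "reach (TE - {{u, v}}) u x" if "reach ?E w x" for x
  proof -
    from reach_avoiding_edge[OF that, of u v]
    consider "reach (?E - {{u, v}}) w x" | "reach (?E - {{u, v}}) w u" | "reach (?E - {{u, v}}) w v"
      by blast
    then show ?thesis
    proof cases
      case 1
      then have "reach (TE - {{u, v}}) w x" by (rule reach_mono) blast
      moreover have "{u, w} \<in> TE - {{u, v}}" using assms by (auto simp: doubleton_eq_iff)
      then have "reach (TE - {{u, v}}) u w" by (rule reach_edge)
      ultimately show ?thesis by (rule reach_trans[rotated])
    next
      case 2
      then have "reach ?E w u" by (rule reach_mono) (rule Diff_subset)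
      with no_return show ?thesis by contradiction
    next
      case 3
      then have "reach ?E w v" by (rule reach_mono) (rule Diff_subset)
      moreover have "{v, u} \<in> ?E" using assms by (auto simp: doubleton_eq_iff insert_commute)
      ultimately have "reach ?E w u" by (rule reach_step)
      with no_return show ?thesis by contradiction
    qed
  qed
  then have "side w u \<subseteq> side u v" unfolding side_def by blast
  moreover have "u \<in> side u v" "u \<notin> side w u" using no_return unfolding side_def by auto
  ultimately show ?thesis by blast
qed

lemma side_induct [consumes 1, case_names leaf branch]:
  assumes "{u, v} \<in> TE"
    and leaf: "\<And>u v. {u, v} \<in> TE \<Longrightarrow> leaf_side u v = {u} \<Longrightarrow> P u v"
    and branch: "\<And>u v w1 w2. {u, v} \<in> TE \<Longrightarrow> {w1, u} \<in> TE \<Longrightarrow> {w2, u} \<in> TE \<Longrightarrow>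
        leaf_side u v = leaf_side w1 u \<union> leaf_side w2 u \<Longrightarrow> P w1 u \<Longrightarrow> P w2 u \<Longrightarrow> P u v"
  shows "P u v"
proof -
  have "P u v" if "{u, v} \<in> TE" "card (side u v) = k" for k u v
    using that
  proof (induction k arbitrary: u v rule: less_induct)
    case (less k)
    have "u \<in> TV" using less.prems(1) edge_vertices by blast
    then consider "tdeg TE u = 1" | "tdeg TE u = 3" using degree_1_or_3 by blast
    then show ?case
    proof cases
      case 1
      with \<open>u \<in> TV\<close> have "u \<in> leaves TV TE" unfolding leaves_def by simp
      then have "leaf_side u v = {u}"
        unfolding leaf_side_eq side_of_leaf[OF 1 less.prems(1)] by blast
      with less.prems(1) show ?thesis by (rule leaf)
    next
      case 2
      obtain w1 w2 where w: "{u, w1} \<in> TE" "{u, w2} \<in> TE" "w1 \<noteq> v" "w2 \<noteq> v"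
        and edges_at_u: "\<forall>e\<in>TE. u \<in> e \<longrightarrow> e = {u, v} \<or> e = {u, w1} \<or> e = {u, w2}"
        by (rule branch_neighbours[OF 2 less.prems(1)])
      have psub: "side w1 u \<subset> side u v" "side w2 u \<subset> side u v"
        using side_psubset[OF less.prems(1) w(1,3)] side_psubset[OF less.prems(1) w(2,4)] .
      then have card_less: "card (side w1 u) < k" "card (side w2 u) < k"
        using psubset_card_mono[OF finite_side[OF less.prems(1)]] less.prems(2) by simp_all
      have w_edges: "{w1, u} \<in> TE" "{w2, u} \<in> TE" using w by (simp_all add: insert_commute)
      have P_w: "P w1 u" "P w2 u"
        using less.IH[OF card_less(1) w_edges(1) refl] less.IH[OF card_less(2) w_edges(2) refl] .
      have "u \<notin> leaves TV TE" using 2 unfolding leaves_def by simp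
      then have "leaf_side u v = leaf_side w1 u \<union> leaf_side w2 u"
        using side_branch_subset[OF edges_at_u] psub unfolding leaf_side_eq by blast
      from branch[OF less.prems(1) w_edges this P_w] show ?thesis .
    qed
  qed
  with assms(1) show ?thesis by blast
qed

lemma leaf_side_nonempty: "{u, v} \<in> TE \<Longrightarrow> leaf_side u v \<noteq> {}"
  by (induction rule: side_induct) auto

lemma leaf_edge:
  assumes "l \<in> leaves TV TE"
  obtains w where "{l, w} \<in> TE"
proof -
  from assms have "card {e\<in>TE. l \<in> e} = 1" unfolding leaves_def tdeg_def by simp
  then have "{e\<in>TE. l \<in> e} \<noteq> {}" by (metis card.empty zero_neq_one)
  then obtain e where "e \<in> TE" "l \<in> e" by blast
  moreover from this obtain w where "e = {l, w}" by (rule edge_at_vertex)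
  ultimately show thesis by (intro that) simp
qed

lemma leaves_cover:
  assumes "{u, v} \<in> TE"
  shows "leaves TV TE \<subseteq> leaf_side u v \<union> leaf_side v u"
proof
  fix l
  assume l: "l \<in> leaves TV TE"
  then have "reach TE u l"
    using tree edge_vertices[OF assms] unfolding is_tree_def leaves_def by blast
  then have "reach (TE - {{u, v}}) u l \<or> reach (TE - {{u, v}}) v l"
    by (rule reach_from_edge_end) simp
  with l show "l \<in> leaf_side u v \<union> leaf_side v u"
    unfolding leaf_side_def by (auto simp: insert_commute)
qed

lemma card_leaves_ne_1: "card (leaves TV TE) \<noteq> 1"
proof
  assume "card (leaves TV TE) = 1"
  then obtain l where leaves: "leaves TV TE = {l}" by (rule card_1_singletonE)
  then have "l \<in> leaves TV TE" by simp
  then obtain w where "{l, w} \<in> TE" by (rule leaf_edge)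
  then have wl: "{w, l} \<in> TE" by (simp add: insert_commute)
  then have "l \<in> leaf_side w l"
    using leaf_side_nonempty[OF wl] leaf_side_subset[of w l] unfolding leaves by blast
  then have "reach (TE - {{w, l}}) w l" unfolding leaf_side_def by blast
  with not_reach_across_edge[OF wl] show False by contradiction
qed

lemma balanced_edge:
  assumes "2 \<le> card (leaves TV TE)"
  obtains u v where "{u, v} \<in> TE"
    "card (leaves TV TE) \<le> 3 * card (leaf_side u v)"
    "card (leaves TV TE) \<le> 3 * card (leaves TV TE - leaf_side u v)"
proof -
  let ?N = "card (leaves TV TE)"
  let ?balanced = "\<lambda>u v. {u, v} \<in> TE \<and> ?N \<le> 3 * card (leaf_side u v)
    \<and> ?N \<le> 3 * card (leaves TV TE - leaf_side u v)"
  have card_complement: "card (leaves TV TE - leaf_side u v) = ?N - card (leaf_side u v)" for u v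
    using card_Diff_subset[OF finite_leaf_side leaf_side_subset] .
  have card_leaf_side: "card (leaf_side u v) \<le> ?N" for u v
    using card_mono[OF finite_leaves leaf_side_subset] .
  have descend: "\<exists>u v. ?balanced u v" if "{a, b} \<in> TE" "?N \<le> 3 * card (leaf_side a b)" for a b
    using that
  proof (induction rule: side_induct)
    case (leaf u v)
    then have "?N \<le> 3 * card (leaves TV TE - leaf_side u v)"
      using assms card_complement[of u v] by simp
    with leaf show ?case by blast
  next
    case (branch u v w1 w2)
    show ?case
    proof (cases "?N \<le> 3 * card (leaves TV TE - leaf_side u v)")
      case True
      with branch.hyps(1) branch.prems show ?thesis by blast
    next
      case False
      have "card (leaf_side u v) \<le> card (leaf_side w1 u) + card (leaf_side w2 u)"
        unfolding branch.hyps(4) by (rule card_Un_le)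
      with False have "?N \<le> 3 * card (leaf_side w1 u) \<or> ?N \<le> 3 * card (leaf_side w2 u)"
        using card_complement[of u v] card_leaf_side[of u v] by linarith
      with branch.IH show ?thesis by blast
    qed
  qed
  from assms obtain l where "l \<in> leaves TV TE" by fastforce
  then obtain w where lw: "{l, w} \<in> TE" by (rule leaf_edge)
  then have wl: "{w, l} \<in> TE" by (simp add: insert_commute)
  have "?N \<le> card (leaf_side l w \<union> leaf_side w l)"
    using card_mono[OF _ leaves_cover[OF lw]] finite_leaf_side by simp
  also have "\<dots> \<le> card (leaf_side l w) + card (leaf_side w l)" by (rule card_Un_le)
  finally have "?N \<le> 3 * card (leaf_side l w) \<or> ?N \<le> 3 * card (leaf_side w l)" by linarith
  then have "\<exists>u v. ?balanced u v" using descend[OF lw] descend[OF wl] by blast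
  with that show thesis by blast
qed

lemma edge_width_le_decomp_width:
  assumes "{u, v} \<in> TE"
  shows "edge_width V adj TV TE f u v \<le> decomp_width V adj TV TE f"
  unfolding decomp_width_def
proof (rule Max_ge)
  let ?w = "\<lambda>(u, v). edge_width V adj TV TE f u v"
  have "{edge_width V adj TV TE f u v | u v. {u, v} \<in> TE} \<subseteq> ?w ` (TV \<times> TV)"
    using edge_vertices by fastforce
  then show "finite {edge_width V adj TV TE f u v | u v. {u, v} \<in> TE}"
    by (rule finite_subset) (simp add: finite_TV)
qed (use assms in blast)

end

section \<open>GF(2) rank\<close>

lemma card_le_gf2_rank:
  assumes "finite X" "R \<subseteq> X" "gf2_rows_indep adj R Y"
  shows "card R \<le> gf2_rank adj X Y"
  unfolding gf2_rank_def
proof (rule Max_ge)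
  have "{card R | R. R \<subseteq> X \<and> finite R \<and> gf2_rows_indep adj R Y} \<subseteq> {..card X}"
    using assms(1) by (auto intro: card_mono)
  then show "finite {card R | R. R \<subseteq> X \<and> finite R \<and> gf2_rows_indep adj R Y}"
    by (rule finite_subset) simp
qed (use assms finite_subset in blast)

lemma gf2_rows_indep_triangular:
  fixes k :: "'i \<Rightarrow> 'k::linorder"
  assumes "finite I" "y ` I \<subseteq> Y" "\<And>i. i \<in> I \<Longrightarrow> adj (x i) (y i)"
    and upper: "\<And>s t. s \<in> I \<Longrightarrow> t \<in> I \<Longrightarrow> s \<noteq> t \<Longrightarrow> k t \<le> k s \<Longrightarrow> \<not> adj (x s) (y t)"
  shows "gf2_rows_indep adj (x ` I) Y"
  unfolding gf2_rows_indep_def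
proof (intro allI impI)
  fix S
  assume S: "S \<subseteq> x ` I \<and> S \<noteq> {}"
  let ?T = "{i\<in>I. x i \<in> S}"
  have fin: "finite ?T" and ne: "?T \<noteq> {}" using assms(1) S by auto
  define t where "t = arg_min_on k ?T"
  have t: "t \<in> ?T" "\<And>s. s \<in> ?T \<Longrightarrow> k t \<le> k s"
    unfolding t_def using arg_min_if_finite(1)[OF fin ne] arg_min_least[OF fin ne] by simp_all
  \<comment> \<open>row t is the only row of S that meets column y t\<close>
  have "{z\<in>S. adj z (y t)} = {x t}"
  proof (intro equalityI subsetI)
    fix z
    assume z: "z \<in> {z\<in>S. adj z (y t)}"
    with S obtain s where s: "s \<in> ?T" "z = x s" by blast
    have "s = t"
    proof (rule ccontr)
      assume "s \<noteq> t"
      with s(1) t have "\<not> adj (x s) (y t)" by (intro upper) simp_all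
      with z s(2) show False by simp
    qed
    with s(2) show "z \<in> {x t}" by simp
  qed (use t(1) assms(3)[of t] in simp)
  moreover have "y t \<in> Y" using t(1) assms(2) by blast
  ultimately show "\<exists>y\<in>Y. odd (card {x\<in>S. adj x y})" by (intro bexI[of _ "y t"]) simp_all
qed

lemma card_le_gf2_rank_triangular:
  fixes k :: "'i \<Rightarrow> 'k::linorder"
  assumes "finite X" "x ` I \<subseteq> X" "y ` I \<subseteq> Y" "\<And>i. i \<in> I \<Longrightarrow> adj (x i) (y i)"
    and upper: "\<And>s t. s \<in> I \<Longrightarrow> t \<in> I \<Longrightarrow> s \<noteq> t \<Longrightarrow> k t \<le> k s \<Longrightarrow> \<not> adj (x s) (y t)"
  shows "card I \<le> gf2_rank adj X Y"
proof -
  have "inj_on x I"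
  proof (rule inj_onI)
    fix s t
    assume "s \<in> I" "t \<in> I" "x s = x t"
    with assms(4) upper[of s t] upper[of t s] show "s = t" by (metis linorder_linear)
  qed
  moreover have "finite I"
    using finite_imageD[OF finite_subset[OF assms(2,1)]] \<open>inj_on x I\<close> .
  ultimately have "card I = card (x ` I)" by (simp add: card_image)
  also have "\<dots> \<le> gf2_rank adj X Y"
    using card_le_gf2_rank assms(1,2)
      gf2_rows_indep_triangular[of I y Y adj x k, OF \<open>finite I\<close> assms(3,4) upper]
    by blast
  finally show ?thesis .
qed

lemma gf2_rows_indep_image:
  assumes "inj h" "\<And>a b. adj (h a) (h b) = adj a b"
  shows "gf2_rows_indep adj (h ` R) (h ` Y) \<longleftrightarrow> gf2_rows_indep adj R Y"
proof -
  have "{x \<in> h ` S. adj x (h y)} = h ` {x\<in>S. adj x y}" for S y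
    by (auto simp: assms(2))
  then have card_eq: "card {x \<in> h ` S. adj x (h y)} = card {x\<in>S. adj x y}" for S y
    using assms(1) by (simp add: card_image inj_on_subset)
  have "gf2_rows_indep adj (h ` R) (h ` Y) \<longleftrightarrow>
      (\<forall>S. S \<subseteq> h ` R \<longrightarrow> S \<noteq> {} \<longrightarrow> (\<exists>y\<in>h ` Y. odd (card {x\<in>S. adj x y})))"
    unfolding gf2_rows_indep_def by (simp add: imp_conjL)
  also have "\<dots> \<longleftrightarrow>
      (\<forall>S. S \<subseteq> R \<longrightarrow> h ` S \<noteq> {} \<longrightarrow> (\<exists>y\<in>h ` Y. odd (card {x\<in>h ` S. adj x y})))"
    by (rule all_subset_image)
  also have "\<dots> \<longleftrightarrow> gf2_rows_indep adj R Y"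
    unfolding gf2_rows_indep_def by (simp add: card_eq imp_conjL)
  finally show ?thesis .
qed

lemma cut_rank_image:
  assumes "inj h" "\<And>a b. adj (h a) (h b) = adj a b"
  shows "cut_rank (h ` V) adj (h ` X) = cut_rank V adj X"
proof -
  let ?ranks = "\<lambda>X Y. {card R | R. R \<subseteq> X \<and> finite R \<and> gf2_rows_indep adj R Y}"
  have inj_on: "inj_on h A" for A using assms(1) by (rule inj_on_subset) simp
  note indep_image = gf2_rows_indep_image[of h adj, OF assms]
  have "?ranks (h ` X) (h ` (V - X)) = ?ranks X (V - X)"
  proof (intro equalityI subsetI)
    fix r
    assume "r \<in> ?ranks (h ` X) (h ` (V - X))"
    then obtain R' where R': "R' \<subseteq> h ` X" "finite R'"
      "gf2_rows_indep adj R' (h ` (V - X))" "r = card R'"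
      by blast
    then obtain R where R: "R \<subseteq> X" "R' = h ` R" unfolding subset_image_iff by blast
    have "finite R" using finite_imageD[OF _ inj_on] R'(2) unfolding R(2) .
    moreover have "gf2_rows_indep adj R (V - X)" using R'(3) unfolding R(2) indep_image .
    moreover have "r = card R" using R'(4) unfolding R(2) card_image[OF inj_on] .
    ultimately show "r \<in> ?ranks X (V - X)" using R(1) by blast
  next
    fix r
    assume "r \<in> ?ranks X (V - X)"
    then obtain R where R: "R \<subseteq> X" "finite R" "gf2_rows_indep adj R (V - X)" "r = card R"
      by blast
    have "h ` R \<subseteq> h ` X" "finite (h ` R)" using R(1,2) by auto
    moreover have "gf2_rows_indep adj (h ` R) (h ` (V - X))" using R(3) unfolding indep_image .
    moreover have "r = card (h ` R)" using R(4) unfolding card_image[OF inj_on] .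
    ultimately show "r \<in> ?ranks (h ` X) (h ` (V - X))" by blast
  qed
  then show ?thesis
    unfolding cut_rank_def gf2_rank_def image_set_diff[OF assms(1)] by simp
qed

section \<open>Cuts of the comparability grid\<close>

definition mixed_rows :: "'a set \<Rightarrow> 'b set \<Rightarrow> ('a \<times> 'b) set \<Rightarrow> 'a set" where
  "mixed_rows A B X = {i\<in>A. (\<exists>j\<in>B. (i, j) \<in> X) \<and> (\<exists>j\<in>B. (i, j) \<notin> X)}"

definition mixed_cols :: "'a set \<Rightarrow> 'b set \<Rightarrow> ('a \<times> 'b) set \<Rightarrow> 'b set" where
  "mixed_cols A B X = {j\<in>B. (\<exists>i\<in>A. (i, j) \<in> X) \<and> (\<exists>i\<in>A. (i, j) \<notin> X)}"

lemma mixed_rows_complement: "mixed_rows A B (A \<times> B - X) = mixed_rows A B X"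
  unfolding mixed_rows_def by blast

lemma mixed_cols_complement: "mixed_cols A B (A \<times> B - X) = mixed_cols A B X"
  unfolding mixed_cols_def by blast

lemma mixed_cols_eq_mixed_rows_swap: "mixed_cols A B X = mixed_rows B A (prod.swap ` X)"
  unfolding mixed_cols_def mixed_rows_def by simp

lemma subset_mixed_rows_times_mixed_cols:
  assumes "X \<subseteq> A \<times> B" "i0 \<in> A - mixed_rows A B X" "j0 \<in> B - mixed_cols A B X" "(i0, j0) \<notin> X"
  shows "X \<subseteq> mixed_rows A B X \<times> mixed_cols A B X"
proof (rule subsetI)
  fix p
  assume "p \<in> X"
  with assms(1) obtain i j where p: "p = (i, j)" "i \<in> A" "j \<in> B" "(i, j) \<in> X" by blast
  have "(i, j0) \<notin> X" using assms(3,4) p(2) assms(2) unfolding mixed_cols_def by blast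
  then have "i \<in> mixed_rows A B X" using p assms(3) unfolding mixed_rows_def by blast
  moreover have "(i0, j) \<notin> X" using assms(2,4) p(3) assms(3) unfolding mixed_rows_def by blast
  then have "j \<in> mixed_cols A B X" using p assms(2) unfolding mixed_cols_def by blast
  ultimately show "p \<in> mixed_rows A B X \<times> mixed_cols A B X" using p(1) by simp
qed

lemma mixed_rows_or_mixed_cols_large:
  assumes "finite A" "finite B" "card A = n" "card B = n" "X \<subseteq> A \<times> B"
    and "n * n \<le> 3 * card X" "n * n \<le> 3 * card (A \<times> B - X)"
  shows "n \<le> 2 * card (mixed_rows A B X) \<or> n \<le> 2 * card (mixed_cols A B X)"
proof (rule ccontr)
  let ?R = "mixed_rows A B X" and ?C = "mixed_cols A B X"
  assume "\<not> ?thesis"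
  then have small: "2 * card ?R < n" "2 * card ?C < n" by auto
  have R_sub: "?R \<subseteq> A" and C_sub: "?C \<subseteq> B" unfolding mixed_rows_def mixed_cols_def by auto
  have fin: "finite ?R" "finite ?C"
    using finite_subset[OF R_sub assms(1)] finite_subset[OF C_sub assms(2)] .
  have "\<not> A \<subseteq> ?R"
  proof
    assume "A \<subseteq> ?R"
    from card_mono[OF fin(1) this] small(1) assms(3) show False by linarith
  qed
  then obtain i0 where i0: "i0 \<in> A - ?R" by blast
  have "\<not> B \<subseteq> ?C"
  proof
    assume "B \<subseteq> ?C"
    from card_mono[OF fin(2) this] small(2) assms(4) show False by linarith
  qed
  then obtain j0 where j0: "j0 \<in> B - ?C" by blast
  have "(2 * card ?R) * (2 * card ?C) < n * n"
    using small by (intro mult_strict_mono) auto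
  then have few: "4 * card (?R \<times> ?C) < n * n" by (simp add: card_cartesian_product)
  \<comment> \<open>the crossing of a pure row and a pure column lies in X or in its complement, and that
    whole side is covered by mixed rows times mixed columns\<close>
  have "X \<subseteq> ?R \<times> ?C \<or> A \<times> B - X \<subseteq> ?R \<times> ?C"
  proof (cases "(i0, j0) \<in> X")
    case True
    have "A \<times> B - X \<subseteq> mixed_rows A B (A \<times> B - X) \<times> mixed_cols A B (A \<times> B - X)"
      by (rule subset_mixed_rows_times_mixed_cols)
        (use i0 j0 True in \<open>auto simp: mixed_rows_complement mixed_cols_complement\<close>)
    then show ?thesis unfolding mixed_rows_complement mixed_cols_complement by (rule disjI2)
  next
    case False
    from subset_mixed_rows_times_mixed_cols[OF assms(5) i0 j0 this] show ?thesis by (rule disjI1)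
  qed
  then have "card X \<le> card (?R \<times> ?C) \<or> card (A \<times> B - X) \<le> card (?R \<times> ?C)"
    using card_mono[OF finite_cartesian_product[OF fin]] by blast
  with few assms(6,7) show False by linarith
qed

lemma comp_grid_adj_swap: "comp_grid_adj (prod.swap p) (prod.swap q) = comp_grid_adj p q"
  unfolding comp_grid_adj_def by (cases p, cases q) auto

lemma swap_comp_grid_V: "prod.swap ` comp_grid_V n = comp_grid_V n"
  unfolding comp_grid_V_def by (rule product_swap)

lemma finite_comp_grid_V: "finite (comp_grid_V n)"
  unfolding comp_grid_V_def by simp

lemma card_comp_grid_V: "card (comp_grid_V n) = n * n"
  unfolding comp_grid_V_def by (simp add: card_cartesian_product)

lemma card_mixed_rows_le_cut_rank:
  assumes "X \<subseteq> comp_grid_V n"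
  shows "card (mixed_rows {1..n} {1..n} X) \<le> 2 * cut_rank (comp_grid_V n) comp_grid_adj X"
proof -
  let ?M = "mixed_rows {1..n} {1..n} X" and ?Y = "comp_grid_V n - X"
  have fin: "finite X" using finite_subset[OF assms finite_comp_grid_V] .
  have "\<forall>i\<in>?M. \<exists>j. j \<in> {1..n} \<and> (i, j) \<notin> X" unfolding mixed_rows_def by blast
  from bchoice[OF this] obtain out where out: "\<forall>i\<in>?M. out i \<in> {1..n} \<and> (i, out i) \<notin> X" ..
  have "\<forall>i\<in>?M. \<exists>j. j \<in> {1..n} \<and> (i, j) \<in> X" unfolding mixed_rows_def by blast
  from bchoice[OF this] obtain inn where inn: "\<forall>i\<in>?M. inn i \<in> {1..n} \<and> (i, inn i) \<in> X" ..
  define A where "A = {i\<in>?M. (i, 1) \<in> X}"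
  define B where "B = {i\<in>?M. (i, 1) \<notin> X}"
  have M_in: "i \<in> {1..n}" if "i \<in> ?M" for i using that unfolding mixed_rows_def by blast
  have out_A: "1 < out i" if "i \<in> A" for i
  proof -
    have "out i \<in> {1..n}" "(i, out i) \<notin> X" "(i, 1) \<in> X" using that out unfolding A_def by auto
    then have "out i \<noteq> 1" by auto
    with \<open>out i \<in> {1..n}\<close> show ?thesis by simp
  qed
  have inn_B: "1 < inn i" if "i \<in> B" for i
  proof -
    have "inn i \<in> {1..n}" "(i, inn i) \<in> X" "(i, 1) \<notin> X" using that inn unfolding B_def by auto
    then have "inn i \<noteq> 1" by auto
    with \<open>inn i \<in> {1..n}\<close> show ?thesis by simp
  qed
  \<comment> \<open>A row in A starts in X and later leaves it, a row in B does the reverse.  Ordered by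
    increasing resp. decreasing index, these rows against the chosen columns are triangular.\<close>
  have "card A \<le> gf2_rank comp_grid_adj X ?Y"
  proof (rule card_le_gf2_rank_triangular[where x = "\<lambda>i. (i, 1)" and y = "\<lambda>i. (i, out i)"
        and k = "\<lambda>i. i"])
    show "(\<lambda>i. (i, 1)) ` A \<subseteq> X" unfolding A_def by blast
    show "(\<lambda>i. (i, out i)) ` A \<subseteq> ?Y"
    proof (rule image_subsetI)
      fix i
      assume "i \<in> A"
      then have "i \<in> ?M" unfolding A_def by simp
      with out M_in show "(i, out i) \<in> ?Y" unfolding comp_grid_V_def by blast
    qed
    show "comp_grid_adj (i, 1) (i, out i)" if "i \<in> A" for i
      using out_A[OF that] unfolding comp_grid_adj_def by simp
    show "\<not> comp_grid_adj (s, 1) (t, out t)" if "t \<in> A" "s \<noteq> t" "t \<le> s" for s t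
      using out_A[OF that(1)] that(2,3) unfolding comp_grid_adj_def by simp
  qed (rule fin)
  moreover have "card B \<le> gf2_rank comp_grid_adj X ?Y"
  proof (rule card_le_gf2_rank_triangular[where x = "\<lambda>i. (i, inn i)" and y = "\<lambda>i. (i, 1)"
        and k = "\<lambda>i. - int i"])
    show "(\<lambda>i. (i, inn i)) ` B \<subseteq> X" using inn unfolding B_def by blast
    show "(\<lambda>i. (i, 1)) ` B \<subseteq> ?Y"
    proof (rule image_subsetI)
      fix i
      assume "i \<in> B"
      then have "i \<in> {1..n}" "(i, 1) \<notin> X" using M_in unfolding B_def by blast+
      then show "(i, 1) \<in> ?Y" unfolding comp_grid_V_def by simp
    qed
    show "comp_grid_adj (i, inn i) (i, 1)" if "i \<in> B" for i
      using inn_B[OF that] unfolding comp_grid_adj_def by simp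
    show "\<not> comp_grid_adj (s, inn s) (t, 1)" if "s \<in> B" "s \<noteq> t" "- int t \<le> - int s" for s t
      using inn_B[OF that(1)] that(2,3) unfolding comp_grid_adj_def by simp
  qed (rule fin)
  moreover have "card ?M \<le> card A + card B"
  proof -
    have "?M = A \<union> B" unfolding A_def B_def by blast
    then show ?thesis by (simp add: card_Un_le)
  qed
  ultimately show ?thesis unfolding cut_rank_def by linarith
qed

lemma card_mixed_cols_le_cut_rank:
  assumes "X \<subseteq> comp_grid_V n"
  shows "card (mixed_cols {1..n} {1..n} X) \<le> 2 * cut_rank (comp_grid_V n) comp_grid_adj X"
proof -
  have "prod.swap ` X \<subseteq> comp_grid_V n"
    using assms swap_comp_grid_V by blast
  then have "card (mixed_cols {1..n} {1..n} X)
      \<le> 2 * cut_rank (comp_grid_V n) comp_grid_adj (prod.swap ` X)"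
    unfolding mixed_cols_eq_mixed_rows_swap by (rule card_mixed_rows_le_cut_rank)
  also have "cut_rank (comp_grid_V n) comp_grid_adj (prod.swap ` X)
      = cut_rank (comp_grid_V n) comp_grid_adj X"
    using cut_rank_image[of prod.swap comp_grid_adj "comp_grid_V n" X, OF _ comp_grid_adj_swap]
    unfolding swap_comp_grid_V by simp
  finally show ?thesis .
qed

lemma balanced_cut_rank_comp_grid:
  assumes "X \<subseteq> comp_grid_V n"
    and "n * n \<le> 3 * card X" "n * n \<le> 3 * card (comp_grid_V n - X)"
  shows "n \<le> 4 * cut_rank (comp_grid_V n) comp_grid_adj X"
proof -
  have "n \<le> 2 * card (mixed_rows {1..n} {1..n} X) \<or> n \<le> 2 * card (mixed_cols {1..n} {1..n} X)"
    by (rule mixed_rows_or_mixed_cols_large) (use assms in \<open>simp_all add: comp_grid_V_def\<close>)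
  with card_mixed_rows_le_cut_rank[OF assms(1)] card_mixed_cols_le_cut_rank[OF assms(1)]
  show ?thesis by linarith
qed

lemma comp_grid_decomp_width_ge:
  assumes "rank_decomp (comp_grid_V n) TV TE f"
  shows "n \<le> 4 * decomp_width (comp_grid_V n) comp_grid_adj TV TE f"
proof -
  let ?V = "comp_grid_V n"
  from assms have tree: "cubic_tree TV TE" and bij: "bij_betw f (leaves TV TE) ?V"
    unfolding rank_decomp_def cubic_tree_def by auto
  interpret cubic_tree TV TE by (rule tree)
  have N: "card (leaves TV TE) = n * n"
    using bij_betw_same_card[OF bij] card_comp_grid_V by simp
  show ?thesis
  proof (cases "n \<le> 1")
    case True
    with card_leaves_ne_1 N show ?thesis by (cases n) auto
  next
    case False
    then have "2 * 2 \<le> n * n" using mult_le_mono[of 2 n 2 n] by simp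
    with N have two_leaves: "2 \<le> card (leaves TV TE)" by simp
    obtain u v where e: "{u, v} \<in> TE"
      and large: "n * n \<le> 3 * card (leaf_side u v)"
        "n * n \<le> 3 * card (leaves TV TE - leaf_side u v)"
      by (rule balanced_edge[OF two_leaves, unfolded N])
    let ?X = "f ` leaf_side u v"
    have inj: "inj_on f (leaves TV TE)" using bij by (rule bij_betw_imp_inj_on)
    have image_leaves: "f ` leaves TV TE = ?V" using bij by (rule bij_betw_imp_surj_on)
    have "?X \<subseteq> ?V" using leaf_side_subset image_leaves by blast
    moreover have "card ?X = card (leaf_side u v)"
      using card_image[OF inj_on_subset[OF inj leaf_side_subset]] .
    moreover have "?V - ?X = f ` (leaves TV TE - leaf_side u v)"
      using inj_on_image_set_diff[OF inj _ leaf_side_subset] image_leaves by simp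
    then have "card (?V - ?X) = card (leaves TV TE - leaf_side u v)"
      using card_image[OF inj_on_subset[OF inj Diff_subset]] by simp
    ultimately have "n \<le> 4 * cut_rank ?V comp_grid_adj ?X"
      using large by (intro balanced_cut_rank_comp_grid) simp_all
    also have "cut_rank ?V comp_grid_adj ?X = edge_width ?V comp_grid_adj TV TE f u v"
      unfolding edge_width_def leaf_side_def ..
    also have "\<dots> \<le> decomp_width ?V comp_grid_adj TV TE f"
      by (rule edge_width_le_decomp_width[OF e])
    finally show ?thesis by simp
  qed
qed

lemma enat_le_rank_width:
  assumes "\<And>TV TE f. rank_decomp V TV TE f \<Longrightarrow> k \<le> decomp_width V adj TV TE f"
  shows "enat k \<le> rank_width V adj"
  unfolding rank_width_def
proof (rule INF_greatest)
  fix d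
  assume "d \<in> {(TV, TE, f). rank_decomp V TV TE f}"
  with assms show "enat k \<le> enat (case d of (TV, TE, f) \<Rightarrow> decomp_width V adj TV TE f)"
    by auto
qed

theorem mainTheorem9:
  fixes n :: nat
  assumes "n \<ge> 1"
  shows "enat n \<le> 4 * rank_width (comp_grid_V n) comp_grid_adj"
proof -
  \<comment> \<open>For n = 1 the bound holds only because no
    rank-decomposition exists (a cubic tree never has exactly one leaf).\<close>
  have "enat ((n + 3) div 4) \<le> rank_width (comp_grid_V n) comp_grid_adj"
    using comp_grid_decomp_width_ge by (intro enat_le_rank_width) fastforce
  then have "4 * enat ((n + 3) div 4) \<le> 4 * rank_width (comp_grid_V n) comp_grid_adj"
    by (rule mult_left_mono) simp
  moreover have "enat n \<le> 4 * enat ((n + 3) div 4)" by (simp add: numeral_eq_enat)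
  ultimately show ?thesis by (rule order_trans[rotated])
qed

end
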